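(* Let $n\in\mathbb N$ and let $(M,d)$ be a metric space with $d(x,y)\in\{0,1,\dots,n\}$ for all $x,y\in M$. Let $\mu\in ba(\widetilde M)$ be positive, let $\gamma\in(0,1)$, and let $A\subseteq\widetilde M$ be $\gamma$-cyclically monotonic. Then there exists a cyclically monotonic subset $B\subseteq A$ with $\mu(B)\ge\mu(A)-2n(1-\gamma)\mu(\widetilde M)$.
   Context: $\widetilde M=\{(x,y)\in M\times M:x\ne y\}$. $ba(\widetilde M)$ denotes the bounded finitely additive signed measures on the power set of $\widetilde M$. For $\gamma\in(0,1]$, $A\subseteq\widetilde M$ is $\gamma$-cyclically monotonic if for every finite sequence $(x_1,y_1),\dots,(x_k,y_k)\in A$, with $y_{k+1}=y_1$, $\sum_{i=1}^k\min\{d(x_i,y_{i+1})-\gamma d(x_i,y_i),\,d(y_i,y_{i+1})\}\ge0$. $A$ is cyclically monotonic if for every such finite sequence $\sum_{i=1}^k d(x_i,y_{i+1})\ge\sum_{i=1}^k d(x_i,y_i)$ (equivalently, $1$-cyclically monotonic). *)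

theory Defs
  imports "HOL-Analysis.Analysis"
begin

definition Mtilde :: "'a set \<Rightarrow> ('a \<times> 'a) set" where
  "Mtilde M = {(x, y). x \<in> M \<and> y \<in> M \<and> x \<noteq> y}"

text \<open>Bounded finitely additive signed measures on the power set of a set S
  (values on sets outside Pow S are irrelevant).\<close>
definition ba :: "'b set \<Rightarrow> ('b set \<Rightarrow> real) set" where
  "ba S = {\<mu>. (\<forall>E F. E \<subseteq> S \<longrightarrow> F \<subseteq> S \<longrightarrow> E \<inter> F = {} \<longrightarrow> \<mu> (E \<union> F) = \<mu> E + \<mu> F)
              \<and> (\<exists>C. \<forall>E. E \<subseteq> S \<longrightarrow> \<bar>\<mu> E\<bar> \<le> C)}"

definition positive_on :: "'b set \<Rightarrow> ('b set \<Rightarrow> real) \<Rightarrow> bool" where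
  "positive_on S \<mu> \<longleftrightarrow> (\<forall>E. E \<subseteq> S \<longrightarrow> 0 \<le> \<mu> E)"

text \<open>A finite sequence (x_1,y_1),...,(x_k,y_k) is given by x,y :: nat => 'a on indices 0..k-1,
  with y_{k+1} = y_1 realised by index (i+1) mod k.\<close>
definition gamma_cyclically_monotonic ::
  "('a \<Rightarrow> 'a \<Rightarrow> real) \<Rightarrow> real \<Rightarrow> ('a \<times> 'a) set \<Rightarrow> bool" where
  "gamma_cyclically_monotonic d \<gamma> A \<longleftrightarrow>
     (\<forall>k::nat. \<forall>x y :: nat \<Rightarrow> 'a. 1 \<le> k \<longrightarrow> (\<forall>i<k. (x i, y i) \<in> A) \<longrightarrow>
        0 \<le> (\<Sum>i<k. min (d (x i) (y ((i + 1) mod k)) - \<gamma> * d (x i) (y i))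
                         (d (y i) (y ((i + 1) mod k)))))"

definition cyclically_monotonic ::
  "('a \<Rightarrow> 'a \<Rightarrow> real) \<Rightarrow> ('a \<times> 'a) set \<Rightarrow> bool" where
  "cyclically_monotonic d A \<longleftrightarrow>
     (\<forall>k::nat. \<forall>x y :: nat \<Rightarrow> 'a. 1 \<le> k \<longrightarrow> (\<forall>i<k. (x i, y i) \<in> A) \<longrightarrow>
        (\<Sum>i<k. d (x i) (y i)) \<le> (\<Sum>i<k. d (x i) (y ((i + 1) mod k))))"

end

(* Rockafellar's construction turns the gamma-cyclic monotonicity of A into a potential p that is
   1-Lipschitz on M and satisfies p y - p x >= gamma d(x,y) on A: minus p z is the infimum of the
   costs of chains of pairs of A leading from z to a fixed base point. As d is integer-valued, every
   rounded potential floor(p + j/m) is still 1-Lipschitz, so the pairs on which it is tight form a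
   cyclically monotonic set (the cyclic sums telescope). A pair of A fails to be tight only if the
   fractional part of p y + j/m is below d(x,y) - (p y - p x) <= n (1 - gamma) <= 1/m, which happens
   for at most one j < m. So the m sets of non-tight pairs are disjoint, and one of them has measure
   at most mu(M~)/m <= 2 n (1 - gamma) mu(M~). *)

theory Submission
  imports Defs
begin

lemma ba_additive:
  "\<mu> \<in> ba S \<Longrightarrow> E \<subseteq> S \<Longrightarrow> F \<subseteq> S \<Longrightarrow> E \<inter> F = {} \<Longrightarrow> \<mu> (E \<union> F) = \<mu> E + \<mu> F"
  unfolding ba_def by blast

lemma ba_empty: "\<mu> \<in> ba S \<Longrightarrow> \<mu> {} = 0"
  using ba_additive[of \<mu> S "{}" "{}"] by simp

lemma ba_Diff:
  assumes "\<mu> \<in> ba S" "E \<subseteq> F" "F \<subseteq> S"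
  shows "\<mu> (F - E) = \<mu> F - \<mu> E"
proof -
  have "\<mu> (E \<union> (F - E)) = \<mu> E + \<mu> (F - E)"
    using assms by (intro ba_additive[OF assms(1)]) auto
  then show ?thesis
    using assms(2) by (simp add: Un_absorb1)
qed

lemma ba_mono:
  assumes "\<mu> \<in> ba S" "positive_on S \<mu>" "E \<subseteq> F" "F \<subseteq> S"
  shows "\<mu> E \<le> \<mu> F"
proof -
  have "0 \<le> \<mu> (F - E)"
    using assms(2,4) unfolding positive_on_def by blast
  then show ?thesis
    using ba_Diff[OF assms(1,3,4)] by simp
qed

lemma ba_finite_UN:
  assumes "\<mu> \<in> ba S" "finite I" "disjoint_family_on R I" "\<And>j. j \<in> I \<Longrightarrow> R j \<subseteq> S"
  shows "\<mu> (\<Union>j\<in>I. R j) = (\<Sum>j\<in>I. \<mu> (R j))"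
  using assms(2,3,4)
proof (induction I rule: finite_induct)
  case empty
  show ?case using ba_empty[OF assms(1)] by simp
next
  case (insert i I)
  then have "R i \<inter> (\<Union>j\<in>I. R j) = {}" "disjoint_family_on R I"
    by (simp_all add: disjoint_family_on_insert)
  moreover have "(\<Union>j\<in>I. R j) \<subseteq> S"
    using insert.prems(2) by blast
  ultimately show ?case
    using insert ba_additive[OF assms(1), of "R i" "\<Union>j\<in>I. R j"] by simp
qed

lemma ba_disjoint_family_obtain_small:
  assumes "\<mu> \<in> ba S" "positive_on S \<mu>" "finite I" "I \<noteq> {}"
    and "disjoint_family_on R I" "\<And>j. j \<in> I \<Longrightarrow> R j \<subseteq> S"
  obtains j where "j \<in> I" "\<mu> (R j) \<le> \<mu> S / card I"
proof -
  have "\<exists>j\<in>I. \<mu> (R j) \<le> \<mu> S / card I"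
  proof (rule ccontr)
    assume "\<not> ?thesis"
    then have "(\<Sum>j\<in>I. \<mu> S / card I) < (\<Sum>j\<in>I. \<mu> (R j))"
      using assms(3,4) by (intro sum_strict_mono) (auto simp: not_le)
    also have "\<dots> = \<mu> (\<Union>j\<in>I. R j)"
      using ba_finite_UN[OF assms(1,3,5,6)] by simp
    also have "\<dots> \<le> \<mu> S"
      using assms(6) by (intro ba_mono[OF assms(1,2)]) auto
    finally show False
      using assms(3,4) by simp
  qed
  then show thesis
    using that by blast
qed

(* The cost of the path z, y_1, x_1, y_2, x_2, ..., y_k, x_k, w for ps = [(x_1, y_1), ..., (x_k, y_k)],
   where each step from y_i back to x_i earns the rebate gamma d(x_i, y_i). *)
fun chain_cost :: "('a \<Rightarrow> 'a \<Rightarrow> real) \<Rightarrow> real \<Rightarrow> 'a \<Rightarrow> ('a \<times> 'a) list \<Rightarrow> 'a \<Rightarrow> real" where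
  "chain_cost d \<gamma> z [] w = d z w"
| "chain_cost d \<gamma> z ((x, y) # ps) w = d z y - \<gamma> * d x y + chain_cost d \<gamma> x ps w"

lemma chain_cost_eq_sum:
  "chain_cost d \<gamma> z ps w = d z ((map snd ps @ [w]) ! 0) +
     (\<Sum>i<length ps. d (fst (ps ! i)) ((map snd ps @ [w]) ! Suc i) - \<gamma> * d (fst (ps ! i)) (snd (ps ! i)))"
proof (induction ps arbitrary: z)
  case Nil
  show ?case by simp
next
  case (Cons p ps)
  then show ?case
    by (cases p) (simp add: sum.lessThan_Suc_shift del: sum.lessThan_Suc)
qed

lemma chain_cost_closed_nonneg:
  assumes "Metric_space M d" "A \<subseteq> M \<times> M" "gamma_cyclically_monotonic d \<gamma> A"
    and "set ps \<subseteq> A" "z \<in> M" "w \<in> M"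
  shows "0 \<le> chain_cost d \<gamma> z ps w + d w z"
proof (cases "ps = []")
  case True
  then show ?thesis
    using Metric_space.nonneg[OF assms(1), of z w] Metric_space.nonneg[OF assms(1), of w z] by simp
next
  case False
  then obtain m where k: "length ps = Suc m"
    by (cases ps) auto
  define X where "X i = fst (ps ! i)" for i
  define Y where "Y i = snd (ps ! i)" for i
  have in_A: "\<forall>i<Suc m. (X i, Y i) \<in> A"
    using assms(4) k unfolding X_def Y_def by (metis nth_mem prod.collapse subsetD)
  have in_M: "X i \<in> M \<and> Y i \<in> M" if "i \<le> m" for i
  proof -
    have "(X i, Y i) \<in> A"
      using in_A that by simp
    then show ?thesis
      using assms(2) by blast
  qed
  let ?step = "\<lambda>i. d (X i) (Y (Suc i)) - \<gamma> * d (X i) (Y i)"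
  have "0 \<le> (\<Sum>i<Suc m. min (d (X i) (Y ((i + 1) mod Suc m)) - \<gamma> * d (X i) (Y i))
                              (d (Y i) (Y ((i + 1) mod Suc m))))"
    using assms(3)[unfolded gamma_cyclically_monotonic_def, rule_format, of "Suc m" X Y] in_A
    by simp
  also have "\<dots> \<le> (\<Sum>i<Suc m. d (X i) (Y ((i + 1) mod Suc m)) - \<gamma> * d (X i) (Y i))"
    by (intro sum_mono) simp
  also have "\<dots> = (\<Sum>i<m. ?step i) + d (X m) (Y 0) - \<gamma> * d (X m) (Y m)"
    by simp
  also have "\<dots> \<le> (\<Sum>i<m. ?step i) + d (X m) w + d w z + d z (Y 0) - \<gamma> * d (X m) (Y m)"
  proof -
    have "d (X m) (Y 0) \<le> d (X m) w + d w (Y 0)" "d w (Y 0) \<le> d w z + d z (Y 0)"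
      using Metric_space.triangle[OF assms(1)] in_M[of m] in_M[of 0] assms(5,6) by auto
    then show ?thesis
      by linarith
  qed
  also have "\<dots> = chain_cost d \<gamma> z ps w + d w z"
    unfolding chain_cost_eq_sum k
    by (simp add: nth_append k X_def Y_def)
  finally show ?thesis .
qed

lemma chain_cost_le_dist_plus:
  assumes "Metric_space M d" "A \<subseteq> M \<times> M" "set ps \<subseteq> A" "u \<in> M" "v \<in> M" "w \<in> M"
  shows "chain_cost d \<gamma> u ps w \<le> d u v + chain_cost d \<gamma> v ps w"
proof (cases ps)
  case Nil
  then show ?thesis
    using assms by (simp add: Metric_space.triangle)
next
  case (Cons p qs)
  then have "snd p \<in> M"
    using assms(2,3) by auto
  then show ?thesis
    using Cons assms(1,4,5) by (cases p) (simp add: Metric_space.triangle)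
qed

definition chain_potential :: "('a \<Rightarrow> 'a \<Rightarrow> real) \<Rightarrow> real \<Rightarrow> ('a \<times> 'a) set \<Rightarrow> 'a \<Rightarrow> 'a \<Rightarrow> real" where
  "chain_potential d \<gamma> A z0 z = - Inf {chain_cost d \<gamma> z ps z0 | ps. set ps \<subseteq> A}"

lemma chain_potential_ge:
  assumes "Metric_space M d" "A \<subseteq> M \<times> M" "gamma_cyclically_monotonic d \<gamma> A"
    and "z0 \<in> M" "z \<in> M" "set ps \<subseteq> A"
  shows "- chain_cost d \<gamma> z ps z0 \<le> chain_potential d \<gamma> A z0 z"
proof -
  have "- d z0 z \<le> chain_cost d \<gamma> z qs z0" if "set qs \<subseteq> A" for qs
    using chain_cost_closed_nonneg[OF assms(1-3) that assms(5,4)] by simp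
  then have "bdd_below {chain_cost d \<gamma> z ps z0 | ps. set ps \<subseteq> A}"
    by (intro bdd_belowI[of _ "- d z0 z"]) blast
  then have "Inf {chain_cost d \<gamma> z ps z0 | ps. set ps \<subseteq> A} \<le> chain_cost d \<gamma> z ps z0"
    using assms(6) by (intro cInf_lower) auto
  then show ?thesis
    unfolding chain_potential_def by simp
qed

lemma chain_potential_le:
  assumes "\<And>ps. set ps \<subseteq> A \<Longrightarrow> a \<le> chain_cost d \<gamma> z ps z0"
  shows "chain_potential d \<gamma> A z0 z \<le> - a"
proof -
  have "a \<le> Inf {chain_cost d \<gamma> z ps z0 | ps. set ps \<subseteq> A}"
    using assms by (intro cInf_greatest) (auto intro: exI[of _ "[]"])
  then show ?thesis
    unfolding chain_potential_def by simp
qed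

lemma chain_potential_lipschitz:
  assumes "Metric_space M d" "A \<subseteq> M \<times> M" "gamma_cyclically_monotonic d \<gamma> A"
    and "z0 \<in> M" "u \<in> M" "v \<in> M"
  shows "chain_potential d \<gamma> A z0 v - chain_potential d \<gamma> A z0 u \<le> d u v"
proof -
  have "- chain_potential d \<gamma> A z0 u - d u v \<le> chain_cost d \<gamma> v ps z0" if "set ps \<subseteq> A" for ps
    using chain_potential_ge[OF assms(1-5) that] chain_cost_le_dist_plus[OF assms(1,2) that assms(5,6,4), of \<gamma>]
    by linarith
  then show ?thesis
    using chain_potential_le[of A "- chain_potential d \<gamma> A z0 u - d u v"] by fastforce
qed

lemma chain_potential_increase:
  assumes "Metric_space M d" "A \<subseteq> M \<times> M" "gamma_cyclically_monotonic d \<gamma> A"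
    and "z0 \<in> M" "(x, y) \<in> A"
  shows "\<gamma> * d x y \<le> chain_potential d \<gamma> A z0 y - chain_potential d \<gamma> A z0 x"
proof -
  have "y \<in> M"
    using assms(2,5) by auto
  have "\<gamma> * d x y - chain_potential d \<gamma> A z0 y \<le> chain_cost d \<gamma> x ps z0" if "set ps \<subseteq> A" for ps
  proof -
    have "- chain_cost d \<gamma> y ((x, y) # ps) z0 \<le> chain_potential d \<gamma> A z0 y"
      using that assms(5) by (intro chain_potential_ge[OF assms(1-4) \<open>y \<in> M\<close>]) auto
    moreover have "chain_cost d \<gamma> y ((x, y) # ps) z0 = - \<gamma> * d x y + chain_cost d \<gamma> x ps z0"
      using Metric_space.zero[OF assms(1)] \<open>y \<in> M\<close> by simp
    ultimately show ?thesis
      by simp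
  qed
  then show ?thesis
    using chain_potential_le[of A "\<gamma> * d x y - chain_potential d \<gamma> A z0 y"] by fastforce
qed

lemma gamma_cyclically_monotonic_potential:
  assumes "Metric_space M d" "A \<subseteq> M \<times> M" "gamma_cyclically_monotonic d \<gamma> A"
  obtains p where "\<forall>u\<in>M. \<forall>v\<in>M. p v - p u \<le> d u v" "\<forall>(x, y)\<in>A. \<gamma> * d x y \<le> p y - p x"
proof (cases "M = {}")
  case True
  then show thesis
    using assms(2) by (intro that[of "\<lambda>_. 0"]) auto
next
  case False
  then obtain z0 where "z0 \<in> M"
    by blast
  then show thesis
    using chain_potential_lipschitz[OF assms] chain_potential_increase[OF assms]
    by (intro that[of "chain_potential d \<gamma> A z0"]) auto
qed

lemma sum_lessThan_rotate:
  fixes f :: "nat \<Rightarrow> 'b::comm_monoid_add"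
  assumes "0 < k"
  shows "(\<Sum>i<k. f ((i + 1) mod k)) = (\<Sum>i<k. f i)"
proof -
  obtain m where k: "k = Suc m"
    using assms by (cases k) auto
  have "(\<Sum>i<k. f ((i + 1) mod k)) = (\<Sum>i<m. f (Suc i)) + f 0"
  proof -
    have "(\<Sum>i<m. f ((i + 1) mod k)) = (\<Sum>i<m. f (Suc i))"
      by (intro sum.cong) (auto simp: k)
    then show ?thesis
      by (simp add: k)
  qed
  also have "\<dots> = (\<Sum>i<k. f i)"
    unfolding k sum.lessThan_Suc_shift by (simp add: add.commute)
  finally show ?thesis .
qed

lemma cyclically_monotonic_empty: "cyclically_monotonic d {}"
  unfolding cyclically_monotonic_def by (metis empty_iff less_le_trans zero_less_one)

definition tight_pairs :: "('a \<Rightarrow> 'a \<Rightarrow> real) \<Rightarrow> ('a \<Rightarrow> real) \<Rightarrow> ('a \<times> 'a) set \<Rightarrow> ('a \<times> 'a) set" where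
  "tight_pairs d \<phi> A = {(x, y) \<in> A. \<phi> y - \<phi> x = d x y}"

lemma cyclically_monotonic_tight_pairs:
  assumes "\<forall>u\<in>M. \<forall>v\<in>M. \<phi> v - \<phi> u \<le> d u v" "A \<subseteq> M \<times> M"
  shows "cyclically_monotonic d (tight_pairs d \<phi> A)"
  unfolding cyclically_monotonic_def
proof (intro allI impI)
  fix k :: nat and x y :: "nat \<Rightarrow> 'a"
  assume k: "1 \<le> k" and tight: "\<forall>i<k. (x i, y i) \<in> tight_pairs d \<phi> A"
  then have in_M: "x i \<in> M" "y i \<in> M" if "i < k" for i
    using assms(2) that unfolding tight_pairs_def by auto
  have "(\<Sum>i<k. d (x i) (y i)) = (\<Sum>i<k. \<phi> (y i) - \<phi> (x i))"
    using tight unfolding tight_pairs_def by (intro sum.cong) auto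
  also have "\<dots> = (\<Sum>i<k. \<phi> (y i)) - (\<Sum>i<k. \<phi> (x i))"
    by (simp add: sum_subtractf)
  also have "\<dots> = (\<Sum>i<k. \<phi> (y ((i + 1) mod k)) - \<phi> (x i))"
    using sum_lessThan_rotate[of k "\<lambda>i. \<phi> (y i)"] k by (simp add: sum_subtractf)
  also have "\<dots> \<le> (\<Sum>i<k. d (x i) (y ((i + 1) mod k)))"
    using assms(1) in_M k by (intro sum_mono) simp
  finally show "(\<Sum>i<k. d (x i) (y i)) \<le> (\<Sum>i<k. d (x i) (y ((i + 1) mod k)))" .
qed

lemma floor_shift_lipschitz:
  fixes a b c t :: real
  assumes "a - b \<le> c" "c \<in> \<int>"
  shows "of_int \<lfloor>a + t\<rfloor> - of_int \<lfloor>b + t\<rfloor> \<le> c"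
proof -
  obtain D where c: "c = of_int D"
    using assms(2) by (auto elim: Ints_cases)
  have "\<lfloor>a + t\<rfloor> \<le> \<lfloor>b + t + of_int D\<rfloor>"
    using assms(1) c by (intro floor_mono) simp
  then show ?thesis
    using c by (simp add: floor_add_int[symmetric])
qed

lemma floor_diff_deficit_imp_frac_less:
  fixes a b s :: real and D :: int
  assumes "of_int D - (a - b) \<le> s" "\<lfloor>a\<rfloor> - \<lfloor>b\<rfloor> < D"
  shows "b < of_int \<lfloor>b\<rfloor> + s"
proof -
  have "\<lfloor>a\<rfloor> < \<lfloor>b\<rfloor> + D"
    using assms(2) by linarith
  then have "a < of_int (\<lfloor>b\<rfloor> + D)"
    by (rule floor_less_iff[THEN iffD1])
  then show ?thesis
    using assms(1) by linarith
qed

lemma floor_shift_deficit_unique: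
  fixes a b :: real and D :: int and m i j :: nat
  assumes slack: "of_int D - (a - b) \<le> 1 / real m" and "i < m" "j < m"
    and deficit: "\<lfloor>a + real i / real m\<rfloor> - \<lfloor>b + real i / real m\<rfloor> < D" "\<lfloor>a + real j / real m\<rfloor> - \<lfloor>b + real j / real m\<rfloor> < D"
  shows "i = j"
proof -
  have frac_small: "b + t < \<lfloor>b + t\<rfloor> + 1 / real m" if "\<lfloor>a + t\<rfloor> - \<lfloor>b + t\<rfloor> < D" for t
    using slack that by (intro floor_diff_deficit_imp_frac_less[of D "a + t"]) simp_all
  have False if "i' < j'" "j' < m"
    and "\<lfloor>a + real i' / real m\<rfloor> - \<lfloor>b + real i' / real m\<rfloor> < D" "\<lfloor>a + real j' / real m\<rfloor> - \<lfloor>b + real j' / real m\<rfloor> < D"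
    for i' j' :: nat
  proof -
    define F where "F = \<lfloor>b + real i' / real m\<rfloor>"
    have F: "of_int F \<le> b + real i' / real m" "b + real i' / real m < of_int F + 1 / real m"
      using frac_small[OF that(3)] unfolding F_def by linarith+
    have gap: "1 / real m \<le> real j' / real m - real i' / real m"
      using that(1) by (simp add: diff_divide_distrib[symmetric] divide_right_mono)
    have "(real j' - real i') / real m \<le> (real m - 1) / real m"
      using that(1,2) by (intro divide_right_mono) linarith+
    then have "real j' / real m - real i' / real m \<le> 1 - 1 / real m"
      using that(2) by (simp add: diff_divide_distrib)
    then have "of_int F + 1 / real m \<le> b + real j' / real m" "b + real j' / real m < of_int F + 1"
      using F gap by linarith+
    then have "\<lfloor>b + real j' / real m\<rfloor> = F"
      using divide_nonneg_nonneg[of 1 "real m"] by (intro floor_unique) linarith+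
    then show False
      using frac_small[OF that(4)] \<open>of_int F + 1 / real m \<le> b + real j' / real m\<close> by simp
  qed
  then show "i = j"
    using assms(2,3) deficit by (metis linorder_neqE_nat)
qed

lemma disjoint_family_rounding_deficits:
  fixes m :: nat
  assumes lip: "\<forall>u\<in>M. \<forall>v\<in>M. p v - p u \<le> d u v" and int_valued: "\<forall>u\<in>M. \<forall>v\<in>M. d u v \<in> \<int>"
    and "A \<subseteq> M \<times> M" and slack: "\<forall>(x, y)\<in>A. d x y - (p y - p x) \<le> 1 / real m"
  shows "disjoint_family_on (\<lambda>j::nat. A - tight_pairs d (\<lambda>z. of_int \<lfloor>p z + real j / real m\<rfloor>) A) {..<m}"
  unfolding disjoint_family_on_def
proof (intro ballI impI)
  fix i j
  assume "i \<in> {..<m}" "j \<in> {..<m}" "i \<noteq> j"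
  show "(A - tight_pairs d (\<lambda>z. of_int \<lfloor>p z + real i / real m\<rfloor>) A) \<inter>
        (A - tight_pairs d (\<lambda>z. of_int \<lfloor>p z + real j / real m\<rfloor>) A) = {}"
  proof (rule ccontr)
    assume "\<not> ?thesis"
    then obtain x y where xy: "(x, y) \<in> A"
      and deficient: "\<forall>l\<in>{i, j}. of_int \<lfloor>p y + real l / real m\<rfloor> - of_int \<lfloor>p x + real l / real m\<rfloor> \<noteq> d x y"
      unfolding tight_pairs_def by auto
    then have "x \<in> M" "y \<in> M"
      using assms(3) by auto
    then obtain D where D: "d x y = of_int D"
      using int_valued by (meson Ints_cases)
    have "\<lfloor>p y + real l / real m\<rfloor> - \<lfloor>p x + real l / real m\<rfloor> < D" if "l \<in> {i, j}" for l :: nat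
    proof -
      have "of_int \<lfloor>p y + real l / real m\<rfloor> - of_int \<lfloor>p x + real l / real m\<rfloor> \<le> d x y"
        using lip int_valued \<open>x \<in> M\<close> \<open>y \<in> M\<close> by (intro floor_shift_lipschitz) auto
      then show ?thesis
        using deficient that D by fastforce
    qed
    moreover have "of_int D - (p y - p x) \<le> 1 / real m"
      using slack xy D by auto
    ultimately have "i = j"
      using \<open>i \<in> {..<m}\<close> \<open>j \<in> {..<m}\<close> by (intro floor_shift_deficit_unique) auto
    then show False
      using \<open>i \<noteq> j\<close> by simp
  qed
qed

lemma cyclically_monotonic_subset_by_rounding:
  fixes m :: nat
  assumes lip: "\<forall>u\<in>M. \<forall>v\<in>M. p v - p u \<le> d u v" and int_valued: "\<forall>u\<in>M. \<forall>v\<in>M. d u v \<in> \<int>"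
    and slack: "\<forall>(x, y)\<in>A. d x y - (p y - p x) \<le> 1 / real m" and "0 < m"
    and "A \<subseteq> M \<times> M" "\<mu> \<in> ba S" "positive_on S \<mu>" "A \<subseteq> S"
  obtains B where "B \<subseteq> A" "cyclically_monotonic d B" "\<mu> A - \<mu> B \<le> \<mu> S / real m"
proof -
  define B where "B j = tight_pairs d (\<lambda>z. of_int \<lfloor>p z + real j / real m\<rfloor>) A" for j :: nat
  have B_sub: "B j \<subseteq> A" for j
    unfolding B_def tight_pairs_def by auto
  have "disjoint_family_on (\<lambda>j. A - B j) {..<m}"
    unfolding B_def using disjoint_family_rounding_deficits[OF lip int_valued \<open>A \<subseteq> M \<times> M\<close> slack] .
  then obtain j where "\<mu> (A - B j) \<le> \<mu> S / card {..<m}"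
    using ba_disjoint_family_obtain_small[OF assms(6,7)] \<open>0 < m\<close> \<open>A \<subseteq> S\<close> by blast
  moreover have "\<mu> (A - B j) = \<mu> A - \<mu> (B j)"
    using ba_Diff[OF assms(6) B_sub \<open>A \<subseteq> S\<close>] .
  moreover have "cyclically_monotonic d (B j)"
    unfolding B_def
  proof (rule cyclically_monotonic_tight_pairs[OF _ \<open>A \<subseteq> M \<times> M\<close>])
    show "\<forall>u\<in>M. \<forall>v\<in>M. of_int \<lfloor>p v + real j / real m\<rfloor> - of_int \<lfloor>p u + real j / real m\<rfloor> \<le> d u v"
      using lip int_valued by (auto intro: floor_shift_lipschitz)
  qed
  ultimately show thesis
    using that[OF B_sub] by simp
qed

lemma gamma_cyclically_monotonic_large_subset:
  fixes m :: nat and L :: real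
  assumes "Metric_space M d" "A \<subseteq> M \<times> M" "gamma_cyclically_monotonic d \<gamma> A" "\<gamma> \<le> 1"
    and int_valued: "\<forall>u\<in>M. \<forall>v\<in>M. d u v \<in> \<int>" and bounded: "\<forall>u\<in>M. \<forall>v\<in>M. d u v \<le> L"
    and "0 < m" "L * (1 - \<gamma>) \<le> 1 / real m"
    and "\<mu> \<in> ba S" "positive_on S \<mu>" "A \<subseteq> S"
  obtains B where "B \<subseteq> A" "cyclically_monotonic d B" "\<mu> A - \<mu> B \<le> \<mu> S / real m"
proof -
  obtain p where lip: "\<forall>u\<in>M. \<forall>v\<in>M. p v - p u \<le> d u v"
    and potential: "\<forall>(x, y)\<in>A. \<gamma> * d x y \<le> p y - p x"
    using gamma_cyclically_monotonic_potential[OF assms(1-3)] by blast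
  have "d x y - (p y - p x) \<le> 1 / real m" if "(x, y) \<in> A" for x y
  proof -
    have "d x y - (p y - p x) \<le> (1 - \<gamma>) * d x y"
      using potential that by (auto simp: algebra_simps)
    also have "\<dots> \<le> (1 - \<gamma>) * L"
      using bounded assms(2,4) that by (intro mult_left_mono) auto
    finally show ?thesis
      using assms(8) by (simp add: mult.commute)
  qed
  then show thesis
    using cyclically_monotonic_subset_by_rounding[OF lip int_valued _ assms(7,2,9-11)] that by blast
qed

lemma obtain_unit_fraction_between:
  fixes c :: real
  assumes "0 < c" "2 * c \<le> 1"
  obtains m :: nat where "0 < m" "c \<le> 1 / m" "1 / m \<le> 2 * c"
proof -
  define m where "m = nat \<lfloor>1 / c\<rfloor>"
  have "2 \<le> 1 / c"
    using assms by (simp add: field_simps)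
  then have m: "real m \<le> 1 / c" "1 / c - 1 < real m"
    unfolding m_def by linarith+
  have "1 / (2 * c) \<le> 1 / c - 1"
    using assms by (simp add: field_simps)
  with m have "1 / (2 * c) < real m"
    by linarith
  moreover have "0 < 1 / (2 * c)"
    using assms by simp
  ultimately have "0 < m"
    by linarith
  have "1 / m \<le> 2 * c"
    using \<open>1 / (2 * c) < real m\<close> \<open>0 < m\<close> assms by (simp add: field_simps)
  moreover have "c \<le> 1 / m"
    using m \<open>0 < m\<close> assms by (simp add: field_simps)
  ultimately show thesis
    using that \<open>0 < m\<close> by blast
qed

lemma Mtilde_dist_pos:
  assumes "Metric_space M d" "(x, y) \<in> Mtilde M"
  shows "0 < d x y"
  using assms Metric_space.nonneg[OF assms(1), of x y] Metric_space.zero[OF assms(1), of x y]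
  unfolding Mtilde_def by (auto simp: less_le)

theorem lemma2p7:
  fixes n :: nat and M :: "'a set" and d :: "'a \<Rightarrow> 'a \<Rightarrow> real"
    and \<mu> :: "('a \<times> 'a) set \<Rightarrow> real" and \<gamma> :: real and A :: "('a \<times> 'a) set"
  assumes "Metric_space M d"
    and "\<forall>x\<in>M. \<forall>y\<in>M. \<exists>j::nat. j \<le> n \<and> d x y = real j"
    and "\<mu> \<in> ba (Mtilde M)" and "positive_on (Mtilde M) \<mu>"
    and "0 < \<gamma>" and "\<gamma> < 1"
    and "A \<subseteq> Mtilde M" and "gamma_cyclically_monotonic d \<gamma> A"
  shows "\<exists>B. B \<subseteq> A \<and> cyclically_monotonic d B \<and>
           \<mu> B \<ge> \<mu> A - 2 * real n * (1 - \<gamma>) * \<mu> (Mtilde M)"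
proof -
  define c where "c = real n * (1 - \<gamma>)"
  have A_M: "A \<subseteq> M \<times> M"
    using assms(7) unfolding Mtilde_def by auto
  have int_valued: "\<forall>u\<in>M. \<forall>v\<in>M. d u v \<in> \<int>" and bounded: "\<forall>u\<in>M. \<forall>v\<in>M. d u v \<le> n"
    using assms(2) by fastforce+
  have "0 \<le> \<mu> (Mtilde M)" "\<mu> A \<le> \<mu> (Mtilde M)"
    using assms(3,4,7) ba_mono[of \<mu> "Mtilde M"] unfolding positive_on_def by auto
  show ?thesis
  proof (cases "\<mu> A \<le> 2 * c * \<mu> (Mtilde M)")
    case True
    then show ?thesis
      using ba_empty[OF assms(3)] cyclically_monotonic_empty unfolding c_def
      by (intro exI[of _ "{}"]) (auto simp: mult.assoc)
  next
    case False
    have "A \<noteq> {}"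
      using False ba_empty[OF assms(3)] \<open>0 \<le> \<mu> (Mtilde M)\<close> assms(6) unfolding c_def by auto
    then obtain x y where "(x, y) \<in> A"
      by auto
    then have "0 < d x y" "d x y \<le> n"
      using Mtilde_dist_pos[OF assms(1)] assms(7) bounded A_M by auto
    then have "0 < c"
      unfolding c_def using assms(6) by (intro mult_pos_pos) linarith+
    moreover have "2 * c \<le> 1"
      using False \<open>\<mu> A \<le> \<mu> (Mtilde M)\<close> \<open>0 \<le> \<mu> (Mtilde M)\<close>
      by (smt (verit) mult_le_cancel_right1)
    ultimately obtain m :: nat where m: "0 < m" "c \<le> 1 / m" "1 / m \<le> 2 * c"
      by (rule obtain_unit_fraction_between)
    obtain B where "B \<subseteq> A" "cyclically_monotonic d B" "\<mu> A - \<mu> B \<le> \<mu> (Mtilde M) / real m"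
      using gamma_cyclically_monotonic_large_subset[OF assms(1) A_M assms(8) less_imp_le[OF assms(6)]
          int_valued bounded m(1) m(2)[unfolded c_def] assms(3,4,7)] by blast
    moreover have "\<mu> (Mtilde M) / real m \<le> 2 * c * \<mu> (Mtilde M)"
      using mult_right_mono[OF m(3) \<open>0 \<le> \<mu> (Mtilde M)\<close>] by simp
    ultimately show ?thesis
      unfolding c_def by (intro exI[of _ B]) auto
  qed
qed

end
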